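(* Let $p,q$ be distinct positive integers and $n\ge1$. For every nonempty finite sequence $s$ of elements of $\{p,q\}$, the map $\{p,q\}^n\to\{p,q\}^n$, $x\mapsto A^{p,q}_n(x,s)$, is a bijection (i.e. $A^{p,q}_n$ is a permutation automaton).
   Context: Let $p,q$ be distinct positive integers. Define $\mathrm{Opp}(p)=q$, $\mathrm{Opp}(q)=p$. For $x\in\{p,q\}$ and a finite sequence $s=(s_1,\dots,s_m)$ of positive integers, $RLD^{p,q}(x,s)$ is the sequence over $\{p,q\}$ consisting of $s_1$ copies of $x$, then $s_2$ copies of $\mathrm{Opp}(x)$, then $s_3$ copies of $x$, and so on alternately. For $n\ge1$ and $x=(x_1,\dots,x_n)\in\{p,q\}^n$: $RLD^{p,q}_1(x_1,s)=RLD^{p,q}(x_1,s)$ and $RLD^{p,q}_n(x_{1:n},s)=RLD^{p,q}(x_n, RLD^{p,q}_{n-1}(x_{1:n-1},s))$. For a nonempty sequence $t$ over $\{p,q\}$, $\mathrm{OppEnd}(t)=\mathrm{Opp}(\text{last entry of } t)$. The automaton $A^{p,q}_n$ has state set $\{p,q\}^n$; for a state $x$ and a nonempty finite sequence $s$ over $\{p,q\}$, $A^{p,q}_n(x,s)$ is the state whose $i$-th coordinate is $\mathrm{OppEnd}(RLD^{p,q}_i(x_{1:i},s))$, $i=1,\dots,n$. *)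

theory Defs
  imports Main
begin

definition Opp :: "nat \<Rightarrow> nat \<Rightarrow> nat \<Rightarrow> nat" where
  "Opp p q x = (if x = p then q else p)"

definition RLD :: "nat \<Rightarrow> nat \<Rightarrow> nat \<Rightarrow> nat list \<Rightarrow> nat list" where
  "RLD p q x s = concat (map (\<lambda>i. replicate (s ! i) (if even i then x else Opp p q x)) [0..<length s])"

definition RLDn :: "nat \<Rightarrow> nat \<Rightarrow> nat list \<Rightarrow> nat list \<Rightarrow> nat list" where
  "RLDn p q xs s = foldl (\<lambda>t x. RLD p q x t) s xs"

definition OppEnd :: "nat \<Rightarrow> nat \<Rightarrow> nat list \<Rightarrow> nat" where
  "OppEnd p q t = Opp p q (last t)"

definition Aut :: "nat \<Rightarrow> nat \<Rightarrow> nat \<Rightarrow> nat list \<Rightarrow> nat list \<Rightarrow> nat list" where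
  "Aut p q n x s = map (\<lambda>i. OppEnd p q (RLDn p q (take (Suc i) x) s)) [0..<n]"

definition states :: "nat \<Rightarrow> nat \<Rightarrow> nat \<Rightarrow> nat list set" where
  "states p q n = {x. length x = n \<and> set x \<subseteq> {p, q}}"

end

theory Submission
  imports Defs
begin

text \<open>Appending a letter a to a state x of length n extends A_n(x, s) by one coordinate, and that
  coordinate is Opp a or a according to the parity of the length of RLD_n(x, s), which does not
  depend on a (positivity of p and q makes every run nonempty, so the last letter of a run-length
  decoding is read off from that parity). So the automaton acts triangularly, each coordinate through a bijection of
  {p, q} chosen by the earlier ones; it is therefore injective on the finite set of states,
  hence bijective.\<close>

lemma Opp_Opp: "p \<noteq> q \<Longrightarrow> a \<in> {p, q} \<Longrightarrow> Opp p q (Opp p q a) = a"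
  by (auto simp: Opp_def)

lemma inj_on_Opp: "p \<noteq> q \<Longrightarrow> inj_on (Opp p q) {p, q}"
  by (auto simp: inj_on_def Opp_def)

lemma RLD_Nil [simp]: "RLD p q a [] = []"
  by (simp add: RLD_def)

lemma RLD_snoc:
  "RLD p q a (t @ [c]) = RLD p q a t @ replicate c (if even (length t) then a else Opp p q a)"
proof -
  have prefix: "map (\<lambda>i. replicate ((t @ [c]) ! i) (if even i then a else Opp p q a)) [0..<length t]
      = map (\<lambda>i. replicate (t ! i) (if even i then a else Opp p q a)) [0..<length t]"
    by (auto simp: nth_append)
  show ?thesis
    unfolding RLD_def length_append_singleton upt_Suc_append[OF le0] map_append prefix by simp
qed

lemma length_RLD: "length (RLD p q a t) = sum_list t"
  by (induction t rule: rev_induct) (simp_all add: RLD_snoc)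

lemma set_RLD_subset: "a \<in> {p, q} \<Longrightarrow> set (RLD p q a t) \<subseteq> {p, q}"
  by (induction t rule: rev_induct) (auto simp: RLD_snoc Opp_def)

lemma last_RLD:
  assumes "t \<noteq> []" and "last t \<noteq> 0"
  shows "last (RLD p q a t) = (if odd (length t) then a else Opp p q a)"
proof -
  obtain u c where t: "t = u @ [c]"
    using assms(1) rev_exhaust by blast
  with assms(2) show ?thesis
    by (cases c) (simp_all add: RLD_snoc)
qed

lemma RLDn_snoc: "RLDn p q (xs @ [a]) s = RLD p q a (RLDn p q xs s)"
  by (simp add: RLDn_def)

lemma RLDn_in_lists:
  assumes "s \<noteq> []" and "set s \<subseteq> {p, q}" and "0 < p" and "0 < q" and "set xs \<subseteq> {p, q}"
  shows "RLDn p q xs s \<noteq> [] \<and> set (RLDn p q xs s) \<subseteq> {p, q}"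
  using assms(5)
proof (induction xs rule: rev_induct)
  case Nil
  with assms(1,2) show ?case
    by (simp add: RLDn_def)
next
  case (snoc a xs)
  let ?t = "RLDn p q xs s"
  from snoc have t: "?t \<noteq> []" "set ?t \<subseteq> {p, q}"
    by auto
  with assms(3,4) have "sum_list ?t \<noteq> 0"
    by (auto simp: sum_list_eq_0_iff neq_Nil_conv)
  then have "RLD p q a ?t \<noteq> []"
    by (metis length_RLD list.size(3))
  moreover have "set (RLD p q a ?t) \<subseteq> {p, q}"
    using snoc.prems by (intro set_RLD_subset) auto
  ultimately show ?case
    by (simp add: RLDn_snoc)
qed

lemma Aut_snoc:
  assumes "length xs = n"
  shows "Aut p q (Suc n) (xs @ [a]) s
    = Aut p q n xs s @ [OppEnd p q (RLD p q a (RLDn p q xs s))]"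
  using assms by (simp add: Aut_def RLDn_snoc)

lemma Aut_in_states: "Aut p q n x s \<in> states p q n"
  by (auto simp: states_def Aut_def OppEnd_def Opp_def)

lemma finite_states: "finite (states p q n)"
proof -
  have "states p q n = {xs. set xs \<subseteq> {p, q} \<and> length xs = n}"
    by (auto simp: states_def)
  then show ?thesis
    by (simp add: finite_lists_length_eq)
qed

lemma OppEnd_RLD:
  assumes "p \<noteq> q" and "a \<in> {p, q}" and "t \<noteq> []" and "last t \<noteq> 0"
  shows "OppEnd p q (RLD p q a t) = (if odd (length t) then Opp p q a else a)"
  using assms by (simp add: OppEnd_def last_RLD Opp_Opp)

lemma inj_on_OppEnd_RLD:
  assumes "p \<noteq> q" and "t \<noteq> []" and "last t \<noteq> 0"
  shows "inj_on (\<lambda>a. OppEnd p q (RLD p q a t)) {p, q}"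
proof (cases "odd (length t)")
  case True
  with assms show ?thesis
    using inj_on_Opp[OF assms(1)] by (simp add: inj_on_def OppEnd_RLD)
next
  case False
  with assms show ?thesis
    by (simp add: inj_on_def OppEnd_RLD)
qed

lemma inj_on_Aut:
  assumes "s \<noteq> []" and "set s \<subseteq> {p, q}" and "0 < p" and "0 < q" and "p \<noteq> q"
  shows "inj_on (\<lambda>x. Aut p q n x s) (states p q n)"
proof (induction n)
  case 0
  show ?case
    by (auto simp: states_def inj_on_def)
next
  case (Suc n)
  show ?case
  proof (rule inj_onI)
    fix x y
    assume x: "x \<in> states p q (Suc n)" and y: "y \<in> states p q (Suc n)"
      and eq: "Aut p q (Suc n) x s = Aut p q (Suc n) y s"
    obtain x' a where x': "x = x' @ [a]" "x' \<in> states p q n" "a \<in> {p, q}"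
      using x by (cases x rule: rev_cases) (auto simp: states_def)
    obtain y' b where y': "y = y' @ [b]" "y' \<in> states p q n" "b \<in> {p, q}"
      using y by (cases y rule: rev_cases) (auto simp: states_def)
    let ?t = "RLDn p q x' s"
    have eq': "Aut p q n x' s = Aut p q n y' s"
      and last_eq: "OppEnd p q (RLD p q a ?t) = OppEnd p q (RLD p q b (RLDn p q y' s))"
      using eq x' y' by (simp_all add: Aut_snoc states_def)
    have "x' = y'"
      using Suc.IH x'(2) y'(2) eq' by (auto dest: inj_onD)
    have t: "?t \<noteq> []" "set ?t \<subseteq> {p, q}"
      using RLDn_in_lists[OF assms(1-4)] x'(2) by (auto simp: states_def)
    with assms(3,4) have "last ?t \<noteq> 0"
      using last_in_set by fastforce
    with t(1) have "inj_on (\<lambda>a. OppEnd p q (RLD p q a ?t)) {p, q}"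
      using inj_on_OppEnd_RLD[OF assms(5)] by blast
    then have "a = b"
      using last_eq x'(3) y'(3) unfolding \<open>x' = y'\<close> by (rule inj_onD)
    with x'(1) y'(1) \<open>x' = y'\<close> show "x = y"
      by simp
  qed
qed

theorem lemma1:
  fixes p q n :: nat and s :: "nat list"
  assumes "0 < p" and "0 < q" and "p \<noteq> q" and "1 \<le> n"
    and "s \<noteq> []" and "set s \<subseteq> {p, q}"
  shows "bij_betw (\<lambda>x. Aut p q n x s) (states p q n) (states p q n)"
proof -
  have "inj_on (\<lambda>x. Aut p q n x s) (states p q n)"
    using inj_on_Aut assms(1-3,5,6) by blast
  moreover have "(\<lambda>x. Aut p q n x s) ` states p q n \<subseteq> states p q n"
    using Aut_in_states by blast
  ultimately show ?thesis
    using endo_inj_surj[OF finite_states] by (simp add: bij_betw_def)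
qed

end
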